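(* Let $V$ be a real vector space, $R:V\to\mathbb{R}\cup\{+\infty\}$ and $f:\mathbb{R}^m\to\mathbb{R}\cup\{+\infty\}$ convex, $\Phi:V\to\mathbb{R}^m$ linear, $S$ the set of minimizers of $\min_u R(u)+f(\Phi u)$, and $p\in S$ with $R(p)+f(\Phi p)<+\infty$. Let $K=\mathrm{lin}(\{u: R(u)\le R(p)\})$ and $L=\ker\Phi$. Then the minimal face $F(p,S)$ is invariant by $K\cap L$, i.e. $F(p,S)+(K\cap L)\subseteq F(p,S)$.
   Context: A face of a convex set $C$ is a convex $F\subseteq C$ such that every open segment $]x,y[=\{tx+(1-t)y:0<t<1\}$ ($x\ne y$) contained in $C$ which intersects $F$ is contained in $F$; $F(p,C)$ is the intersection of all faces of $C$ containing $p$. The lineality space of a nonempty convex set $C$ is $\mathrm{lin}(C)=\{v: C+\mathbb{R}v\subseteq C\}$. *)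

theory Defs
  imports "HOL-Analysis.Analysis"
begin

definition convex_ext :: "('a::real_vector \<Rightarrow> ereal) \<Rightarrow> bool" where
  "convex_ext g \<longleftrightarrow>
     (\<forall>x y t. 0 < t \<and> t < 1 \<longrightarrow>
        g ((1 - t) *\<^sub>R x + t *\<^sub>R y) \<le> ereal (1 - t) * g x + ereal t * g y)"

definition is_face :: "'a::real_vector set \<Rightarrow> 'a set \<Rightarrow> bool" where
  "is_face F C \<longleftrightarrow> F \<subseteq> C \<and> convex F \<and>
     (\<forall>x y. x \<noteq> y \<and> open_segment x y \<subseteq> C \<and> open_segment x y \<inter> F \<noteq> {}
        \<longrightarrow> open_segment x y \<subseteq> F)"

definition min_face :: "'a::real_vector \<Rightarrow> 'a set \<Rightarrow> 'a set" where
  "min_face p C = \<Inter> {F. is_face F C \<and> p \<in> F}"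

definition lineality :: "'a::real_vector set \<Rightarrow> 'a set" where
  "lineality C = {v. \<forall>x\<in>C. \<forall>t::real. x + t *\<^sub>R v \<in> C}"

end

theory Submission
  imports Defs
begin

text \<open>For \<open>v \<in> K \<inter> L\<close> the whole line \<open>p + \<real>v\<close> consists of minimizers, since \<open>R\<close> does not increase
  along it and \<open>\<Phi>\<close> is constant on it. Any face of \<open>S\<close> containing \<open>p\<close> then contains this line, as \<open>p\<close>
  lies in the relative interior of the line. Moreover, for a face \<open>F\<close> the points \<open>x \<in> F\<close> whose
  line \<open>x + \<real>v\<close> stays in \<open>F\<close> again form a face. For \<open>F = F(p,S)\<close> this face contains \<open>p\<close>, hence
  all of \<open>F(p,S)\<close>, which is the claimed invariance.\<close>

lemma is_face_Inter:
  assumes "\<FF> \<noteq> {}" "\<And>F. F \<in> \<FF> \<Longrightarrow> is_face F S"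
  shows "is_face (\<Inter>\<FF>) S"
proof -
  obtain F0 where "F0 \<in> \<FF>" using assms(1) by blast
  then have "\<Inter>\<FF> \<subseteq> S" using assms(2) unfolding is_face_def by blast
  moreover have "convex (\<Inter>\<FF>)"
    using assms(2) unfolding is_face_def by (intro convex_Inter) blast
  moreover have "open_segment x y \<subseteq> \<Inter>\<FF>"
    if "x \<noteq> y" "open_segment x y \<subseteq> S" "open_segment x y \<inter> \<Inter>\<FF> \<noteq> {}" for x y
    using that assms(2) unfolding is_face_def by (intro Inter_greatest) blast
  ultimately show ?thesis unfolding is_face_def by blast
qed

lemma is_face_min_face:
  assumes "is_face F S" "p \<in> F"
  shows "is_face (min_face p S) S"
  unfolding min_face_def using assms by (intro is_face_Inter) auto

lemma face_contains_line:
  fixes p v :: "'a::real_vector"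
  assumes F: "is_face F S" and "p \<in> F" and line: "\<And>s. p + s *\<^sub>R v \<in> S"
  shows "p + t *\<^sub>R v \<in> F"
proof (cases "t = 0 \<or> v = 0")
  case True
  then show ?thesis using \<open>p \<in> F\<close> by auto
next
  case False
  define x where "x = p - t *\<^sub>R v"
  define y where "y = p + (2 * t) *\<^sub>R v"
  have param: "(1 - u) *\<^sub>R x + u *\<^sub>R y = p + ((3 * u - 1) * t) *\<^sub>R v" for u
    unfolding x_def y_def by (simp add: algebra_simps flip: scaleR_add_left)
  have "y - x = (3 * t) *\<^sub>R v"
    unfolding x_def y_def by (simp add: algebra_simps flip: scaleR_add_left)
  then have "x \<noteq> y" using False by auto
  have "open_segment x y \<subseteq> S"
    using line param by (auto simp: in_segment)
  moreover have "p \<in> open_segment x y"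
    unfolding in_segment using \<open>x \<noteq> y\<close> param[of "1/3"] by (intro conjI exI[of _ "1/3"]) auto
  ultimately have "open_segment x y \<subseteq> F"
    using F \<open>x \<noteq> y\<close> \<open>p \<in> F\<close> unfolding is_face_def by blast
  moreover have "p + t *\<^sub>R v \<in> open_segment x y"
    unfolding in_segment using \<open>x \<noteq> y\<close> param[of "2/3"] by (intro conjI exI[of _ "2/3"]) auto
  ultimately show ?thesis by blast
qed

lemma open_unit_interval_convex_decomposition:
  fixes a b :: real
  assumes "0 < a" "a < 1" "0 < b" "b < 1"
  obtains c \<mu> where "0 < c" "c < 1" "0 < \<mu>" "\<mu> \<le> 1" "(1 - \<mu>) * c + \<mu> * a = b"
proof (cases "b \<le> a")
  case True
  define \<mu> where "\<mu> = b / (2 * a - b)"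
  have "2 * a - b > 0" using assms True by simp
  then have "\<mu> * (2 * a - b) = b" "0 < \<mu>" "\<mu> \<le> 1"
    using assms True unfolding \<mu>_def by (auto simp: field_simps)
  moreover have "(1 - \<mu>) * (b / 2) + \<mu> * a = b / 2 + \<mu> * (2 * a - b) / 2"
    by (simp add: field_simps)
  ultimately show ?thesis using that[of "b / 2" \<mu>] assms by simp
next
  case False
  define \<mu> where "\<mu> = (1 - b) / (1 + b - 2 * a)"
  have "1 + b - 2 * a > 0" using assms False by simp
  then have "\<mu> * (1 + b - 2 * a) = 1 - b" "0 < \<mu>" "\<mu> \<le> 1"
    using assms False unfolding \<mu>_def by (auto simp: field_simps)
  moreover have "(1 - \<mu>) * ((1 + b) / 2) + \<mu> * a = (1 + b) / 2 - \<mu> * (1 + b - 2 * a) / 2"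
    by (simp add: field_simps)
  ultimately have "(1 - \<mu>) * ((1 + b) / 2) + \<mu> * a = b"
    by (simp add: field_simps)
  then show ?thesis using that[of "(1 + b) / 2" \<mu>] assms \<open>0 < \<mu>\<close> \<open>\<mu> \<le> 1\<close> by simp
qed

lemma convex_combination_add_line:
  fixes w z v :: "'a::real_vector"
  assumes "convex F" "w \<in> F" "\<And>s. z + s *\<^sub>R v \<in> F" "0 < \<mu>" "\<mu> \<le> 1"
  shows "(1 - \<mu>) *\<^sub>R w + \<mu> *\<^sub>R z + t *\<^sub>R v \<in> F"
proof -
  have "(1 - \<mu>) *\<^sub>R w + \<mu> *\<^sub>R (z + (t / \<mu>) *\<^sub>R v) \<in> F"
    using assms unfolding convex_def by auto
  then show ?thesis using \<open>0 < \<mu>\<close> by (simp add: algebra_simps)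
qed

lemma convex_points_with_line:
  fixes v :: "'a::real_vector"
  assumes "convex F"
  shows "convex {x \<in> F. \<forall>t. x + t *\<^sub>R v \<in> F}"
  unfolding convex_def
proof (intro ballI allI impI CollectI conjI)
  fix x y t and u w :: real
  assume x: "x \<in> {x \<in> F. \<forall>t. x + t *\<^sub>R v \<in> F}" and y: "y \<in> {x \<in> F. \<forall>t. x + t *\<^sub>R v \<in> F}"
    and uw: "0 \<le> u" "0 \<le> w" "u + w = 1"
  show "u *\<^sub>R x + w *\<^sub>R y \<in> F"
    using x y uw assms unfolding convex_def by blast
  have "u *\<^sub>R (x + t *\<^sub>R v) + w *\<^sub>R (y + t *\<^sub>R v) \<in> F"
    using x y uw assms unfolding convex_def by blast
  moreover have "u *\<^sub>R (x + t *\<^sub>R v) + w *\<^sub>R (y + t *\<^sub>R v) = u *\<^sub>R x + w *\<^sub>R y + (u + w) *\<^sub>R (t *\<^sub>R v)"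
    by (simp add: algebra_simps)
  ultimately show "u *\<^sub>R x + w *\<^sub>R y + t *\<^sub>R v \<in> F" using uw by simp
qed

lemma is_face_points_with_line:
  fixes v :: "'a::real_vector"
  assumes F: "is_face F S"
  shows "is_face {x \<in> F. \<forall>t. x + t *\<^sub>R v \<in> F} S"
proof -
  let ?G = "{x \<in> F. \<forall>t. x + t *\<^sub>R v \<in> F}"
  have "F \<subseteq> S" and "convex F" using F unfolding is_face_def by auto
  have "open_segment x y \<subseteq> ?G"
    if xy: "x \<noteq> y" and "open_segment x y \<subseteq> S" and "open_segment x y \<inter> ?G \<noteq> {}" for x y
  proof
    fix w assume "w \<in> open_segment x y"
    from \<open>open_segment x y \<inter> ?G \<noteq> {}\<close> obtain z where "z \<in> open_segment x y" and zG: "z \<in> ?G"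
      by blast
    then have seg_F: "open_segment x y \<subseteq> F"
      using F that unfolding is_face_def by blast
    obtain a where a: "0 < a" "a < 1" "z = (1 - a) *\<^sub>R x + a *\<^sub>R y"
      using \<open>z \<in> open_segment x y\<close> by (auto simp: in_segment)
    obtain b where b: "0 < b" "b < 1" "w = (1 - b) *\<^sub>R x + b *\<^sub>R y"
      using \<open>w \<in> open_segment x y\<close> by (auto simp: in_segment)
    \<comment> \<open>Write \<open>w\<close> between \<open>z\<close> and another point \<open>w'\<close> of the segment; then
      \<open>w + t v = (1 - \<mu>) w' + \<mu> (z + (t / \<mu>) v)\<close> lies in the convex set \<open>F\<close>.\<close>
    obtain c \<mu> where c: "0 < c" "c < 1" "0 < \<mu>" "\<mu> \<le> 1" "(1 - \<mu>) * c + \<mu> * a = b"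
      using open_unit_interval_convex_decomposition[OF a(1,2) b(1,2)] .
    define w' where "w' = (1 - c) *\<^sub>R x + c *\<^sub>R y"
    have "w' \<in> open_segment x y" unfolding w'_def in_segment using xy c(1,2) by blast
    then have "w' \<in> F" using seg_F by blast
    have param: "(1 - d) *\<^sub>R x + d *\<^sub>R y = x + d *\<^sub>R (y - x)" for d
      by (simp add: algebra_simps)
    have "(1 - \<mu>) *\<^sub>R w' + \<mu> *\<^sub>R z = x + ((1 - \<mu>) * c + \<mu> * a) *\<^sub>R (y - x)"
      unfolding w'_def a(3) param by (simp add: algebra_simps)
    then have w_eq: "w = (1 - \<mu>) *\<^sub>R w' + \<mu> *\<^sub>R z" using c(5) b(3) param by simp
    have "w + t *\<^sub>R v \<in> F" for t
      unfolding w_eq using zG by (intro convex_combination_add_line[OF \<open>convex F\<close> \<open>w' \<in> F\<close> _ c(3,4)]) blast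
    then show "w \<in> ?G" using \<open>w \<in> open_segment x y\<close> seg_F by blast
  qed
  moreover have "?G \<subseteq> S" using \<open>F \<subseteq> S\<close> by blast
  ultimately show ?thesis
    using convex_points_with_line[OF \<open>convex F\<close>, of v] unfolding is_face_def by blast
qed

lemma min_face_add_line_direction:
  fixes p v :: "'a::real_vector"
  assumes line: "\<And>s. p + s *\<^sub>R v \<in> S" and x: "x \<in> min_face p S"
  shows "x + v \<in> min_face p S"
proof (cases "\<exists>F. is_face F S \<and> p \<in> F")
  case False
  then have "min_face p S = UNIV" unfolding min_face_def by auto
  then show ?thesis by simp
next
  case True
  let ?F = "min_face p S"
  let ?G = "{y \<in> ?F. \<forall>t. y + t *\<^sub>R v \<in> ?F}"
  have "is_face ?F S" using True is_face_min_face by blast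
  have "p + t *\<^sub>R v \<in> ?F" for t
    unfolding min_face_def using face_contains_line[OF _ _ line] by blast
  from this[of 0] this have "p \<in> ?G" by simp
  moreover have "is_face ?G S" using is_face_points_with_line[OF \<open>is_face ?F S\<close>] .
  ultimately have "?F \<subseteq> ?G" unfolding min_face_def[of p S] by (intro Inter_lower) simp
  then have "x + 1 *\<^sub>R v \<in> ?F" using x by blast
  then show ?thesis by simp
qed

theorem mainTheorem6:
  fixes R :: "'a::real_vector \<Rightarrow> ereal"
    and f :: "real ^ 'm \<Rightarrow> ereal"
    and \<Phi> :: "'a \<Rightarrow> real ^ 'm"
    and S :: "'a set"
    and p :: 'a
  assumes R_range: "\<And>u. R u \<noteq> -\<infinity>"
    and f_range: "\<And>z. f z \<noteq> -\<infinity>"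
    and R_convex: "convex_ext R"
    and f_convex: "convex_ext f"
    and \<Phi>_linear: "linear \<Phi>"
    and S_def: "S = {u. \<forall>v. R u + f (\<Phi> u) \<le> R v + f (\<Phi> v)}"
    and p_in: "p \<in> S"
    and p_finite: "R p + f (\<Phi> p) < \<infinity>"
  shows "\<forall>x\<in>min_face p S. \<forall>v\<in>lineality {u. R u \<le> R p} \<inter> {w. \<Phi> w = 0}.
           x + v \<in> min_face p S"
proof (intro ballI)
  fix x v
  assume "x \<in> min_face p S" and v: "v \<in> lineality {u. R u \<le> R p} \<inter> {w. \<Phi> w = 0}"
  have "p + s *\<^sub>R v \<in> S" for s
  proof -
    have "R (p + s *\<^sub>R v) \<le> R p" using v unfolding lineality_def by auto
    moreover have "\<Phi> (p + s *\<^sub>R v) = \<Phi> p" using v \<Phi>_linear by (simp add: linear_add linear_scale)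
    ultimately have "R (p + s *\<^sub>R v) + f (\<Phi> (p + s *\<^sub>R v)) \<le> R p + f (\<Phi> p)"
      by (simp add: add_right_mono)
    then show ?thesis using p_in unfolding S_def by (auto intro: order_trans)
  qed
  then show "x + v \<in> min_face p S"
    using min_face_add_line_direction \<open>x \<in> min_face p S\<close> by blast
qed

end
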